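(* Let $\alpha$ be a composition, $w\in CRHW_n$ with $w(\alpha)=\beta\neq0$, $\tau=\tau_w$, and let $j\ge1$ belong to $\mathrm{supp}(w)$ but not be its maximum. Then every entry of $\tau$ in column $j$ other than the greatest one is strictly smaller than the smallest entry of $\tau$ in column $j+1$.
   Context: Box-adding operators on compositions $\alpha=(\alpha_1,\dots,\alpha_k)$: $\mathfrak t_1(\alpha)=(1,\alpha_1,\dots,\alpha_k)$ (a new row on top); for $i\ge2$, $\mathfrak t_i(\alpha)$ increases the leftmost part equal to $i-1$ by $1$ (adding a box in column $i$), and is $0$ if there is no such part; $\mathfrak t_i(0)=0$. A word $w=\mathfrak t_{i_1}\cdots\mathfrak t_{i_n}$ acts by $w(\alpha)=\mathfrak t_{i_1}(\cdots\mathfrak t_{i_n}(\alpha))$. It is a reverse hookword if $i_1\le\cdots\le i_{k+1}>i_{k+2}>\cdots>i_n$ for some $0\le k\le n-1$. $\mathrm{supp}(w)=\{i_1,\dots,i_n\}$; $w$ is connected if $\mathrm{supp}(w)$ is a set of consecutive integers; $CRHW_n$ is the set of connected reverse hookwords of length $n$. If $w(\alpha)=\beta\ne0$, applying $\mathfrak t_{i_n},\dots,\mathfrak t_{i_1}$ successively adds one box at each step (the box added by $\mathfrak t_{i_m}$ is in column $i_m$); $\tau_w$ is the filling of the set of added boxes in which the box added by $\mathfrak t_{i_m}$ has entry $m$. *)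

theory Defs
  imports Main
begin

definition composition :: "nat list \<Rightarrow> bool" where
  "composition a \<longleftrightarrow> (\<forall>x\<in>set a. 0 < x)"

text \<open>Result None encodes 0.
  On success we also return the added box as (row, column), where rows are
  counted from the bottom (last part = row 0), so that adding a new top row
  does not shift the coordinates of previously added boxes.\<close>
definition tstep :: "nat \<Rightarrow> nat list \<Rightarrow> (nat list \<times> (nat \<times> nat)) option" where
  "tstep i a =
     (if i = 1 then Some (1 # a, (length a, 1))
      else if 2 \<le> i \<and> (i - 1) \<in> set a then
        (let r = LEAST r. r < length a \<and> a ! r = i - 1
         in Some (a[r := i], (length a - 1 - r, i)))
      else None)"

fun process :: "(nat \<times> nat) list \<Rightarrow> nat list \<Rightarrow> (nat list \<times> (nat \<times> nat \<times> nat) list) option" where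
  "process [] a = Some (a, [])"
| "process ((i, m) # rest) a =
     (case tstep i a of
        None \<Rightarrow> None
      | Some (a', (r, c)) \<Rightarrow>
          (case process rest a' of
             None \<Rightarrow> None
           | Some (b, cells) \<Rightarrow> Some (b, (r, c, m) # cells)))"

text \<open>The word w = t_{i_1} ... t_{i_n} is the list [i_1,...,i_n]; it acts by
  applying t_{i_n} first, and the box added by t_{i_m} gets entry m.
  Result: Some (beta, tau) with beta = w(alpha) and tau the filling tau_w
  (set of (row, column, entry)), or None if w(alpha) = 0.\<close>
definition word_apply :: "nat list \<Rightarrow> nat list \<Rightarrow> (nat list \<times> (nat \<times> nat \<times> nat) list) option" where
  "word_apply w a = process (rev (zip w [1..<length w + 1])) a"

definition reverse_hookword :: "nat list \<Rightarrow> bool" where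
  "reverse_hookword w \<longleftrightarrow> (\<forall>i\<in>set w. 1 \<le> i) \<and>
     (\<exists>k. k < length w \<and> sorted_wrt (\<le>) (take (k + 1) w) \<and> sorted_wrt (>) (drop k w))"

definition connected_word :: "nat list \<Rightarrow> bool" where
  "connected_word w \<longleftrightarrow> (\<exists>a b. set w = {a..b})"

definition CRHW :: "nat \<Rightarrow> nat list set" where
  "CRHW n = {w. length w = n \<and> reverse_hookword w \<and> connected_word w}"

definition col_entries :: "(nat \<times> nat \<times> nat) list \<Rightarrow> nat \<Rightarrow> nat set" where
  "col_entries tau j = {m. \<exists>r. (r, j, m) \<in> set tau}"

end

theory Submission
  imports Defs
begin

text \<open>The box added by t_{i_m} lies in column i_m and carries entry m, so the
  entries of \<tau>_w in column c are exactly the positions of the letter c in w.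
  If x < z are positions of j and y \<le> x is a position of j + 1, then y < x < z
  with i_y > i_x = i_z. In a reverse hookword a repeated letter lies in the weakly
  increasing prefix, so no larger letter precedes it.\<close>

lemma tstep_column: "tstep i a = Some (a', (r, c)) \<Longrightarrow> c = i"
  unfolding tstep_def by (auto simp: Let_def split: if_splits)

lemma process_cell_in_input:
  "process ps a = Some (b, cells) \<Longrightarrow> (r, c, m) \<in> set cells \<Longrightarrow> (c, m) \<in> set ps"
proof (induction ps arbitrary: a b cells)
  case Nil
  then show ?case by simp
next
  case (Cons p ps)
  obtain i k where p: "p = (i, k)" by (cases p)
  from Cons.prems p obtain a' r' c' b' cells' where
    step: "tstep i a = Some (a', (r', c'))" and rest: "process ps a' = Some (b', cells')"
    and cells: "cells = (r', c', k) # cells'"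
    by (auto split: option.splits prod.splits)
  from Cons.prems(2) Cons.IH[OF rest] tstep_column[OF step] show ?case
    by (auto simp: p cells)
qed

lemma word_apply_cell_nth:
  assumes "word_apply w a = Some (b, \<tau>)" and "(r, c, m) \<in> set \<tau>"
  shows "\<exists>i<length w. c = w ! i \<and> m = Suc i"
proof -
  have "(c, m) \<in> set (zip w (map Suc [0..<length w]))"
    using process_cell_in_input[OF assms(1)[unfolded word_apply_def] assms(2)]
    by (simp add: map_Suc_upt)
  then show ?thesis by (auto simp: set_zip)
qed

lemma col_entries_nth:
  "word_apply w a = Some (b, \<tau>) \<Longrightarrow> m \<in> col_entries \<tau> c \<Longrightarrow> \<exists>i<length w. c = w ! i \<and> m = Suc i"
  unfolding col_entries_def using word_apply_cell_nth by blast

lemma finite_col_entries: "finite (col_entries \<tau> c)"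
proof (rule finite_subset)
  show "col_entries \<tau> c \<subseteq> (\<lambda>(r, c, m). m) ` set \<tau>"
    unfolding col_entries_def by force
qed simp

lemma reverse_hookword_le_before_repeat:
  assumes "reverse_hookword w" and "p < q" "q < r" "r < length w" and "w ! q = w ! r"
  shows "w ! p \<le> w ! q"
proof -
  obtain k where "sorted_wrt (\<le>) (take (k + 1) w)" and dec: "sorted_wrt (>) (drop k w)"
    using assms(1) unfolding reverse_hookword_def by blast
  moreover have "q \<le> k"
  proof (rule ccontr)
    assume "\<not> q \<le> k"
    then have "drop k w ! (r - k) < drop k w ! (q - k)"
      using sorted_wrt_nth_less[OF dec, of "q - k" "r - k"] assms(3,4) by simp
    with \<open>\<not> q \<le> k\<close> assms(3-5) show False by simp
  qed
  ultimately show ?thesis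
    using assms(2-4) unfolding sorted_wrt_iff_nth_less by force
qed

theorem mainTheorem10:
  fixes \<alpha> \<beta> w :: "nat list" and n j :: nat and \<tau> :: "(nat \<times> nat \<times> nat) list"
  assumes "composition \<alpha>"
    and "w \<in> CRHW n"
    and "word_apply w \<alpha> = Some (\<beta>, \<tau>)"
    and "1 \<le> j" and "j \<in> set w" and "j \<noteq> Max (set w)"
  shows "\<forall>x\<in>col_entries \<tau> j. x \<noteq> Max (col_entries \<tau> j) \<longrightarrow>
           (\<forall>y\<in>col_entries \<tau> (j + 1). x < y)"
proof (intro ballI impI)
  fix x y
  assume x: "x \<in> col_entries \<tau> j" and "x \<noteq> Max (col_entries \<tau> j)"
    and y: "y \<in> col_entries \<tau> (j + 1)"
  define z where "z = Max (col_entries \<tau> j)"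
  have "z \<in> col_entries \<tau> j" "x \<le> z"
    using x finite_col_entries[of \<tau> j] by (auto simp: z_def intro: Max_in)
  with \<open>x \<noteq> _\<close> have "x < z" by (simp add: z_def)
  obtain p where p: "p < length w" "w ! p = j + 1" "y = Suc p"
    using col_entries_nth[OF assms(3) y] by metis
  obtain q where q: "w ! q = j" "x = Suc q"
    using col_entries_nth[OF assms(3) x] by metis
  obtain r where r: "r < length w" "w ! r = j" "z = Suc r"
    using col_entries_nth[OF assms(3) \<open>z \<in> _\<close>] by metis
  show "x < y"
  proof (rule ccontr)
    assume "\<not> x < y"
    with p q have "p < q" by (cases "p = q") auto
    with reverse_hookword_le_before_repeat[of w p q r] assms(2) p q r \<open>x < z\<close>
    show False by (simp add: CRHW_def)
  qed
qed

end
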